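(* Let $H$ be the commutative Hopf algebra over $\mathbb{C}$ with linear basis the ladder trees $t_n$, $n\ge 0$ (where $t_0=1_H$ is the unit), with product $t_n\cdot t_m=\frac{(n+m)!}{n!\,m!}\,t_{n+m}$, coproduct $\Delta(t_n)=\sum_{j=0}^n t_j\otimes t_{n-j}$, counit $\bar e(t_n)=\delta_{n,0}$, and antipode $S$. Let $P=\mathrm{id}-E\circ\bar e$ be the projection onto the augmentation ideal (here $E:\mathbb{C}\to H$, $q\mapsto q1_H$). Fix $z\in\mathbb{C}$ and define linear maps $L,Li:H\to\mathbb{C}$ by $L(t_n)=\frac{\ln^n(z)}{n!}$ for $n\ge 0$ and $Li(t_n)=\mathrm{Li}_n(z)$ for $n\ge 1$ (the value $Li(t_0)$ is irrelevant below), where $\mathrm{Li}_n(z)=\sum_{k\ge1}z^k/k^n$ analytically continued. Let $L^{-1}=L\circ S$ and let $m$ denote multiplication in $\mathbb{C}$. For $p\ge 1$ set $$\widetilde a_p(z)=\sum_{j=0}^{p-1}(-1)^j\,\mathrm{Li}_{p-j}(z)\,\frac{\ln^j(z)}{j!}=\mathrm{Li}_p(z)-\mathrm{Li}_{p-1}(z)\ln(z)+\cdots+(-1)^{p-1}\mathrm{Li}_1(z)\frac{\ln^{p-1}(z)}{(p-1)!}.$$ Then for $z\in\mathbb{C}$ (with the same branches of $\ln$ and $\mathrm{Li}_n$ used on both sides), $$\widetilde a_p(z)=m\circ\big(L^{-1}\otimes Li\big)\circ(\mathrm{id}\otimes P)\circ\Delta(t_p).$$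
   Context: $L$ is multiplicative with respect to the product $t_n\cdot t_m=\frac{(n+m)!}{n!m!}t_{n+m}$, i.e. it is a character of $H$. $\mathrm{Li}_n$ denotes the polylogarithm, defined by $\sum_{k\ge1}z^k/k^n$ inside the unit disc and analytically continued with a branch cut along the real axis from $1$ to $+\infty$. *)

theory Defs
  imports "HOL-Complex_Analysis.Complex_Analysis"
begin

text \<open>Off the cut [1,+inf) this is the analytic continuation of sum z^k/k^n with branch cut
 along [1,+inf); in particular Li_1(z) = - Ln(1-z) with the principal logarithm.\<close>

primrec polylog :: "nat \<Rightarrow> complex \<Rightarrow> complex" where
  "polylog 0 z = z / (1 - z)"
| "polylog (Suc n) z = contour_integral (linepath 0 z) (\<lambda>w. polylog n w / w)"

text \<open>An element of H is represented by its (finitely supported) coefficient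
 function x, standing for sum_n x n * t_n. An element of H (x) H is represented by
 its coefficient function w, standing for sum_(i,j) w (i,j) * t_i (x) t_j.\<close>

type_synonym hopfH = "nat \<Rightarrow> complex"
type_synonym hopfHH = "nat \<times> nat \<Rightarrow> complex"

definition tb :: "nat \<Rightarrow> hopfH" where
  "tb n = (\<lambda>k. if k = n then 1 else 0)"

definition supp :: "('a \<Rightarrow> complex) \<Rightarrow> 'a set" where
  "supp x = {n. x n \<noteq> 0}"

definition linfun :: "(nat \<Rightarrow> complex) \<Rightarrow> hopfH \<Rightarrow> complex" where
  "linfun f x = (\<Sum>n\<in>supp x. x n * f n)"

definition linmap :: "(nat \<Rightarrow> hopfH) \<Rightarrow> hopfH \<Rightarrow> hopfH" where
  "linmap g x = (\<lambda>k. \<Sum>n\<in>supp x. x n * g n k)"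

definition hmult :: "hopfH \<Rightarrow> hopfH \<Rightarrow> hopfH" where
  "hmult x y = (\<lambda>k. \<Sum>i\<le>k. of_nat (k choose i) * x i * y (k - i))"

definition hunit :: hopfH where "hunit = tb 0"

definition coprod_t :: "nat \<Rightarrow> hopfHH" where
  "coprod_t n = (\<lambda>(i, j). if i + j = n then 1 else 0)"

definition coprod :: "hopfH \<Rightarrow> hopfHH" where
  "coprod x = (\<lambda>ij. \<Sum>n\<in>supp x. x n * coprod_t n ij)"

definition counit :: "hopfH \<Rightarrow> complex" where
  "counit = linfun (\<lambda>n. if n = 0 then 1 else 0)"

definition unitE :: "complex \<Rightarrow> hopfH" where
  "unitE q = (\<lambda>k. q * hunit k)"

definition projP :: "hopfH \<Rightarrow> hopfH" where
  "projP x = (\<lambda>k. x k - unitE (counit x) k)"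

text \<open>Antipode of the connected graded Hopf algebra H, determined on the basis by
 m o (S (x) id) o Delta = E o e, i.e. S(t_0) = 1 and
 S(t_n) = - sum_(j<n) S(t_j) * t_(n-j) for n >= 1.\<close>
function antipode_t :: "nat \<Rightarrow> hopfH" where
  "antipode_t n = (if n = 0 then hunit
     else (\<lambda>k. - (\<Sum>j<n. hmult (antipode_t j) (tb (n - j)) k)))"
  by auto
termination by (relation "Wellfounded.measure id") auto

definition antipode :: "hopfH \<Rightarrow> hopfH" where
  "antipode = linmap antipode_t"

definition tensor_map :: "(hopfH \<Rightarrow> hopfH) \<Rightarrow> (hopfH \<Rightarrow> hopfH) \<Rightarrow> hopfHH \<Rightarrow> hopfHH" where
  "tensor_map f g w = (\<lambda>(a, b). \<Sum>(i, j)\<in>supp w. w (i, j) * (f (tb i) a * g (tb j) b))"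

definition mult_tensor_fun :: "(hopfH \<Rightarrow> complex) \<Rightarrow> (hopfH \<Rightarrow> complex) \<Rightarrow> hopfHH \<Rightarrow> complex" where
  "mult_tensor_fun \<phi> \<psi> w = (\<Sum>(i, j)\<in>supp w. w (i, j) * (\<phi> (tb i) * \<psi> (tb j)))"

definition charL :: "complex \<Rightarrow> hopfH \<Rightarrow> complex" where
  "charL z = linfun (\<lambda>n. Ln z ^ n / fact n)"

definition charLi :: "complex \<Rightarrow> hopfH \<Rightarrow> complex" where
  "charLi z = linfun (\<lambda>n. polylog n z)"

definition charLinv :: "complex \<Rightarrow> hopfH \<Rightarrow> complex" where
  "charLinv z = charL z \<circ> antipode"

definition a_tilde :: "nat \<Rightarrow> complex \<Rightarrow> complex" where
  "a_tilde p z = (\<Sum>j<p. (-1) ^ j * polylog (p - j) z * Ln z ^ j / fact j)"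

end

theory Submission
  imports Defs
begin

text \<open>Since t_n = t_1^n / n!, the antipode acts on ladder trees by S(t_n) = (-1)^n t_n; from
  the defining recursion of S this is the vanishing of the alternating binomial sum. Hence
  L^-1(t_j) = (-1)^j ln^j(z) / j!. The projection P only removes the term t_p (x) t_0 of
  Delta(t_p), so the right-hand side is the sum over j < p of L^-1(t_j) Li(t_(p-j)), which is
  a_p(z) term by term.\<close>

declare antipode_t.simps [simp del]

lemma supp_tb [simp]: "supp (tb n) = {n}"
  by (auto simp: supp_def tb_def)

lemma linfun_tb [simp]: "linfun f (tb n) = f n"
  by (simp add: linfun_def) (simp add: tb_def)

lemma linmap_tb [simp]: "linmap g (tb n) = g n"
  by (simp add: linmap_def) (simp add: tb_def)

lemma hmult_scaled_tb_tb:
  "hmult (\<lambda>k. c * tb a k) (tb b) = (\<lambda>k. c * of_nat ((a + b) choose a) * tb (a + b) k)"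
proof
  fix k
  have "hmult (\<lambda>k. c * tb a k) (tb b) k
      = (\<Sum>i\<le>k. if i = a then (if k = a + b then c * of_nat (k choose a) else 0) else 0)"
    unfolding hmult_def by (rule sum.cong) (auto simp: tb_def)
  also have "\<dots> = c * of_nat ((a + b) choose a) * tb (a + b) k"
    by (auto simp: tb_def)
  finally show "hmult (\<lambda>k. c * tb a k) (tb b) k = c * of_nat ((a + b) choose a) * tb (a + b) k" .
qed

lemma alternating_binomial_sum_lessThan:
  assumes "n > 0"
  shows "(\<Sum>j<n. (-1) ^ j * of_nat (n choose j)) = - ((-1) ^ n :: 'a :: comm_ring_1)"
proof -
  have "(\<Sum>j<n. (-1) ^ j * of_nat (n choose j)) + ((-1) ^ n :: 'a)
      = (\<Sum>j\<le>n. (-1) ^ j * of_nat (n choose j))"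
    by (simp add: lessThan_Suc_atMost [symmetric])
  also have "\<dots> = 0"
    using choose_alternating_sum [OF assms] .
  finally show ?thesis
    by (simp add: eq_neg_iff_add_eq_0)
qed

lemma antipode_t_closed_form: "antipode_t n = (\<lambda>k. (-1) ^ n * tb n k)"
proof (induction n rule: less_induct)
  case (less n)
  show ?case
  proof (cases "n = 0")
    case True
    then show ?thesis
      by (simp add: hunit_def antipode_t.simps)
  next
    case False
    show ?thesis
    proof
      fix k
      have "antipode_t n k = - (\<Sum>j<n. hmult (antipode_t j) (tb (n - j)) k)"
        using False by (simp add: antipode_t.simps)
      also have "\<dots> = - (\<Sum>j<n. (-1) ^ j * of_nat (n choose j) * tb n k)"
        using less.IH by (simp add: hmult_scaled_tb_tb)
      also have "\<dots> = - ((\<Sum>j<n. (-1) ^ j * of_nat (n choose j)) * tb n k)"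
        by (simp add: sum_distrib_right)
      also have "\<dots> = (-1) ^ n * tb n k"
        using False by (simp add: alternating_binomial_sum_lessThan)
      finally show "antipode_t n k = (-1) ^ n * tb n k" .
    qed
  qed
qed

lemma charLinv_tb: "charLinv z (tb n) = (-1) ^ n * Ln z ^ n / fact n"
proof -
  have "supp (\<lambda>k. (-1) ^ n * tb n k) = {n}"
    by (auto simp: supp_def tb_def)
  then show ?thesis
    by (simp add: charLinv_def antipode_def antipode_t_closed_form charL_def linfun_def)
      (simp add: tb_def)
qed

lemma projP_tb: "projP (tb j) = (if j = 0 then (\<lambda>k. 0) else tb j)"
  unfolding projP_def unitE_def counit_def linfun_tb hunit_def by (auto simp: tb_def)

lemma coprod_tb: "coprod (tb p) = coprod_t p"
  by (simp add: coprod_def) (simp add: tb_def)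

lemma supp_coprod_t: "supp (coprod_t p) = (\<lambda>i. (i, p - i)) ` {..p}"
  by (auto simp: supp_def coprod_t_def image_iff split: if_splits)

lemma tensor_map_coprod_t:
  "tensor_map f g (coprod_t p) (a, b) = (\<Sum>i\<le>p. f (tb i) a * g (tb (p - i)) b)"
  unfolding tensor_map_def supp_coprod_t
  by (subst sum.reindex) (auto simp: inj_on_def coprod_t_def)

definition right_reduced_coprod_t :: "nat \<Rightarrow> hopfHH" where
  "right_reduced_coprod_t p = (\<lambda>(i, j). if i + j = p \<and> j \<noteq> 0 then 1 else 0)"

lemma tensor_map_id_projP_coprod_tb:
  "tensor_map id projP (coprod (tb p)) = right_reduced_coprod_t p"
proof (rule ext, clarify)
  fix a b
  have "tensor_map id projP (coprod (tb p)) (a, b)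
      = (\<Sum>i\<le>p. if i = a then right_reduced_coprod_t p (a, b) else 0)"
    unfolding coprod_tb tensor_map_coprod_t projP_tb right_reduced_coprod_t_def
    by (rule sum.cong) (auto simp: tb_def)
  then show "tensor_map id projP (coprod (tb p)) (a, b) = right_reduced_coprod_t p (a, b)"
    by (auto simp: right_reduced_coprod_t_def)
qed

lemma supp_right_reduced_coprod_t:
  "supp (right_reduced_coprod_t p) = (\<lambda>j. (j, p - j)) ` {..<p}"
  by (auto simp: supp_def right_reduced_coprod_t_def image_iff split: if_splits)

lemma mult_tensor_fun_right_reduced_coprod_t:
  "mult_tensor_fun \<phi> \<psi> (right_reduced_coprod_t p) = (\<Sum>j<p. \<phi> (tb j) * \<psi> (tb (p - j)))"
  unfolding mult_tensor_fun_def supp_right_reduced_coprod_t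
  by (subst sum.reindex) (auto simp: inj_on_def right_reduced_coprod_t_def)

theorem mainTheorem1:
  fixes p :: nat and z :: complex
  assumes "p \<ge> 1"
  shows "a_tilde p z =
    mult_tensor_fun (charLinv z) (charLi z) (tensor_map id projP (coprod (tb p)))"
  unfolding tensor_map_id_projP_coprod_tb mult_tensor_fun_right_reduced_coprod_t
  by (simp add: charLinv_tb charLi_def a_tilde_def mult_ac)

end
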